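(* Let $\Gamma$ be a linear group, i.e. a group isomorphic to a subgroup of $GL_n(\mathbf k)$ for some field $\mathbf k$ and some $n$. Assume that $\Gamma$ is finite-by-abelian, i.e. $\Gamma$ has a finite normal subgroup $N$ such that $\Gamma/N$ is abelian. Then $\Gamma$ is virtually abelian, i.e. $\Gamma$ has an abelian subgroup of finite index. *)

theory Defs
  imports "Jordan_Normal_Form.Matrix" "HOL-Algebra.Coset"
begin

definition GL :: "nat \<Rightarrow> ('k::field) mat monoid" where
  "GL n = \<lparr>carrier = {A \<in> carrier_mat n n. invertible_mat A}, mult = (*), one = 1\<^sub>m n\<rparr>"

definition linear_group_over :: "'k::field itself \<Rightarrow> ('g, 'b) monoid_scheme \<Rightarrow> bool" where
  "linear_group_over _ G \<longleftrightarrow>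
     (\<exists>n (H :: 'k mat set). subgroup H (GL n) \<and> G \<cong> ((GL n)\<lparr>carrier := H\<rparr>))"

definition finite_by_abelian :: "('g, 'b) monoid_scheme \<Rightarrow> bool" where
  "finite_by_abelian G \<longleftrightarrow> (\<exists>N. N \<lhd> G \<and> finite N \<and> comm_group (G Mod N))"

definition virtually_abelian :: "('g, 'b) monoid_scheme \<Rightarrow> bool" where
  "virtually_abelian G \<longleftrightarrow>
     (\<exists>A. subgroup A G \<and> comm_group (G\<lparr>carrier := A\<rparr>) \<and> finite (rcosets\<^bsub>G\<^esub> A))"

end

theory Submission
  imports Defs "HOL-Algebra.Generated_Groups"
begin

text \<open>
  Let \<open>N\<close> be the finite normal subgroup with abelian quotient. All commutators lie in \<open>N\<close>,
  so every conjugacy class lies in a coset of \<open>N\<close> and is finite; hence the centralizer of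
  any finite set has finite index. Linearity enters only once: the matrices of the centralizer
  \<open>C\<close> of \<open>N\<close> span a finite-dimensional space, so the centralizer of \<open>C\<close> equals that of a
  finite subset \<open>B \<subseteq> C\<close>. The centre of \<open>C\<close> is then the centralizer of the finite set
  \<open>N \<union> B\<close>, hence an abelian subgroup of finite index.
\<close>

inductive_set mat_span :: "nat \<Rightarrow> 'k::field mat set \<Rightarrow> 'k mat set" for n B where
  mat_span_zero: "0\<^sub>m n n \<in> mat_span n B"
| mat_span_step: "x \<in> mat_span n B \<Longrightarrow> b \<in> B \<Longrightarrow> x + c \<cdot>\<^sub>m b \<in> mat_span n B"

lemma mat_span_carrier:
  assumes "B \<subseteq> carrier_mat n n" "x \<in> mat_span n B"
  shows "x \<in> carrier_mat n n"
  using assms(2) by induction (use assms(1) in auto)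

lemma mat_span_base:
  assumes "B \<subseteq> carrier_mat n n" "b \<in> B"
  shows "b \<in> mat_span n B"
proof -
  have "0\<^sub>m n n + 1 \<cdot>\<^sub>m b \<in> mat_span n B" by (rule mat_span_step[OF mat_span_zero assms(2)])
  moreover have "0\<^sub>m n n + 1 \<cdot>\<^sub>m b = b" using assms by (intro eq_matI) auto
  ultimately show ?thesis by simp
qed

lemma mat_span_add:
  assumes B: "B \<subseteq> carrier_mat n n" and x: "x \<in> mat_span n B" and y: "y \<in> mat_span n B"
  shows "x + y \<in> mat_span n B"
  using y
proof induction
  case mat_span_zero
  have "x + 0\<^sub>m n n = x" using mat_span_carrier[OF B x] by (intro eq_matI) auto
  then show ?case using x by simp
next
  case (mat_span_step y b c)
  have "x + (y + c \<cdot>\<^sub>m b) = (x + y) + c \<cdot>\<^sub>m b"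
    using mat_span_carrier[OF B x] mat_span_carrier[OF B mat_span_step(1)] B mat_span_step(2)
    by (intro eq_matI) auto
  then show ?case using mat_span.mat_span_step[OF mat_span_step(3) mat_span_step(2)] by simp
qed

lemma mat_span_smult:
  assumes B: "B \<subseteq> carrier_mat n n" and x: "x \<in> mat_span n B"
  shows "d \<cdot>\<^sub>m x \<in> mat_span n B"
  using x
proof induction
  case mat_span_zero
  have "d \<cdot>\<^sub>m 0\<^sub>m n n = (0\<^sub>m n n :: 'a mat)" by (intro eq_matI) auto
  then show ?case by (simp add: mat_span.mat_span_zero)
next
  case (mat_span_step y b c)
  have "d \<cdot>\<^sub>m (y + c \<cdot>\<^sub>m b) = d \<cdot>\<^sub>m y + (d * c) \<cdot>\<^sub>m b"
    using mat_span_carrier[OF B mat_span_step(1)] B mat_span_step(2)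
    by (intro eq_matI) (auto simp: algebra_simps)
  then show ?case using mat_span.mat_span_step[OF mat_span_step(3) mat_span_step(2)] by simp
qed

lemma mat_span_subset:
  assumes B: "B \<subseteq> carrier_mat n n" and sub: "B' \<subseteq> mat_span n B"
  shows "mat_span n B' \<subseteq> mat_span n B"
proof
  fix x assume "x \<in> mat_span n B'"
  then show "x \<in> mat_span n B"
    by induction (use mat_span.mat_span_zero mat_span_add[OF B] mat_span_smult[OF B] sub in blast)+
qed

lemma mat_span_commute:
  assumes M: "M \<in> carrier_mat n n" and B: "B \<subseteq> carrier_mat n n"
    and comm: "\<forall>b\<in>B. M * b = b * M" and x: "x \<in> mat_span n B"
  shows "M * x = x * M"
  using x
proof induction
  case mat_span_zero
  then show ?case using M by simp
next
  case (mat_span_step y b c)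
  have yc: "y \<in> carrier_mat n n" using mat_span_carrier[OF B mat_span_step(1)] .
  have bc: "b \<in> carrier_mat n n" using B mat_span_step(2) by auto
  have "M * (y + c \<cdot>\<^sub>m b) = M * y + c \<cdot>\<^sub>m (M * b)"
    using M yc bc by (simp add: mult_add_distrib_mat mult_smult_distrib)
  also have "\<dots> = y * M + c \<cdot>\<^sub>m (b * M)" using mat_span_step comm by simp
  also have "\<dots> = (y + c \<cdot>\<^sub>m b) * M"
    using M yc bc by (simp add: add_mult_distrib_mat mult_smult_assoc_mat)
  finally show ?case .
qed

definition mat_supported_on :: "nat \<Rightarrow> (nat \<times> nat) set \<Rightarrow> 'a::zero mat \<Rightarrow> bool" where
  "mat_supported_on n P c \<longleftrightarrow> (\<forall>i<n. \<forall>j<n. (i, j) \<notin> P \<longrightarrow> c $$ (i, j) = 0)"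

lemma mat_supported_on_pivot_eliminate:
  fixes c s :: "'k::field mat"
  assumes "c \<in> carrier_mat n n" "s \<in> carrier_mat n n"
    and "mat_supported_on n (insert p P) c" "mat_supported_on n (insert p P) s" "s $$ p \<noteq> 0"
  shows "mat_supported_on n P (c + (- (c $$ p / s $$ p)) \<cdot>\<^sub>m s)"
  unfolding mat_supported_on_def
proof (intro allI impI)
  fix i j assume ij: "i < n" "j < n" "(i, j) \<notin> P"
  have e: "(c + (- (c $$ p / s $$ p)) \<cdot>\<^sub>m s) $$ (i, j) = c $$ (i, j) - c $$ p / s $$ p * s $$ (i, j)"
    using assms(1,2) ij by simp
  show "(c + (- (c $$ p / s $$ p)) \<cdot>\<^sub>m s) $$ (i, j) = 0"
  proof (cases "(i, j) = p")
    case True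
    then show ?thesis using e assms(5) by simp
  next
    case False
    then show ?thesis using e assms(3,4) ij unfolding mat_supported_on_def by auto
  qed
qed

text \<open>Gaussian elimination: induction on the support, pivoting on one entry.\<close>

lemma finite_spanning_subset_of_supported:
  fixes T :: "'k::field mat set"
  assumes "finite P" "T \<subseteq> carrier_mat n n" "\<forall>c\<in>T. mat_supported_on n P c"
  shows "\<exists>B\<subseteq>T. finite B \<and> T \<subseteq> mat_span n B"
  using assms
proof (induction P arbitrary: T rule: finite_induct)
  case empty
  have "c = 0\<^sub>m n n" if "c \<in> T" for c
    using that empty.prems by (intro eq_matI) (auto simp: mat_supported_on_def)
  then have "T \<subseteq> mat_span n {}" using mat_span.mat_span_zero by blast
  then show ?case by blast
next
  case (insert p P)
  show ?case
  proof (cases "\<forall>c\<in>T. c $$ p = 0")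
    case True
    then have "\<forall>c\<in>T. mat_supported_on n P c"
      using insert.prems(2) unfolding mat_supported_on_def by (metis insertE)
    then show ?thesis using insert.IH insert.prems(1) by blast
  next
    case False
    then obtain s where s: "s \<in> T" "s $$ p \<noteq> 0" by blast
    define r where "r c = c + (- (c $$ p / s $$ p)) \<cdot>\<^sub>m s" for c
    have rT: "r ` T \<subseteq> carrier_mat n n" using insert.prems(1) s(1) unfolding r_def by auto
    have "\<forall>c\<in>r ` T. mat_supported_on n P c"
    proof
      fix c' assume "c' \<in> r ` T"
      then obtain c where c: "c \<in> T" "c' = r c" by blast
      show "mat_supported_on n P c'"
        unfolding c(2) r_def
        by (rule mat_supported_on_pivot_eliminate) (use c(1) s insert.prems in auto)
    qed
    then obtain B' where B': "B' \<subseteq> r ` T" "finite B'" "r ` T \<subseteq> mat_span n B'"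
      using insert.IH[OF rT] by blast
    obtain B1 where B1: "B1 \<subseteq> T" "finite B1" "B' = r ` B1"
      using finite_subset_image[OF B'(2,1)] by blast
    define B where "B = insert s B1"
    have BT: "B \<subseteq> T" using B1 s unfolding B_def by auto
    have Bc: "B \<subseteq> carrier_mat n n" using BT insert.prems(1) by auto
    have sB: "s \<in> mat_span n B" using mat_span_base[OF Bc] unfolding B_def by auto
    have shift: "r c + (c $$ p / s $$ p) \<cdot>\<^sub>m s \<in> mat_span n B" if "r c \<in> mat_span n B" for c
      using that mat_span_add[OF Bc] mat_span_smult[OF Bc sB] by blast
    have "B' \<subseteq> mat_span n B"
    proof
      fix x assume "x \<in> B'"
      then obtain b where b: "b \<in> B1" "x = r b" using B1(3) by blast
      have "b \<in> mat_span n B" using mat_span_base[OF Bc] b(1) unfolding B_def by auto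
      then show "x \<in> mat_span n B"
        unfolding b(2) r_def using mat_span_add[OF Bc] mat_span_smult[OF Bc sB] by blast
    qed
    then have rTB: "r ` T \<subseteq> mat_span n B" using B'(3) mat_span_subset[OF Bc] by blast
    have "T \<subseteq> mat_span n B"
    proof
      fix c assume c: "c \<in> T"
      have "c \<in> carrier_mat n n" "s \<in> carrier_mat n n" using c s(1) insert.prems(1) by auto
      then have "r c + (c $$ p / s $$ p) \<cdot>\<^sub>m s = c"
        unfolding r_def by (intro eq_matI) auto
      then show "c \<in> mat_span n B" using shift[of c] rTB c by auto
    qed
    then show ?thesis using BT B1(2) unfolding B_def by blast
  qed
qed

lemma finite_spanning_subset:
  fixes T :: "'k::field mat set"
  assumes "T \<subseteq> carrier_mat n n"
  shows "\<exists>B\<subseteq>T. finite B \<and> T \<subseteq> mat_span n B"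
  using finite_spanning_subset_of_supported[of "{0..<n} \<times> {0..<n}"] assms
  unfolding mat_supported_on_def by auto

lemma mat_commute_finite_subset:
  fixes T :: "'k::field mat set"
  assumes "T \<subseteq> carrier_mat n n"
  shows "\<exists>B\<subseteq>T. finite B \<and> (\<forall>M\<in>carrier_mat n n.
           (\<forall>b\<in>B. M * b = b * M) \<longrightarrow> (\<forall>t\<in>T. M * t = t * M))"
proof -
  obtain B where B: "B \<subseteq> T" "finite B" "T \<subseteq> mat_span n B"
    using finite_spanning_subset[OF assms] by blast
  have "B \<subseteq> carrier_mat n n" using B(1) assms by blast
  then have "M * t = t * M"
    if "M \<in> carrier_mat n n" "\<forall>b\<in>B. M * b = b * M" "t \<in> T" for M t
    using mat_span_commute that B(3) by blast
  then show ?thesis using B(1,2) by blast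
qed

definition centralizer :: "('g, 'b) monoid_scheme \<Rightarrow> 'g set \<Rightarrow> 'g set" where
  "centralizer G S = {x \<in> carrier G. \<forall>s\<in>S. x \<otimes>\<^bsub>G\<^esub> s = s \<otimes>\<^bsub>G\<^esub> x}"

definition conj_class :: "('g, 'b) monoid_scheme \<Rightarrow> 'g \<Rightarrow> 'g set" where
  "conj_class G s = {inv\<^bsub>G\<^esub> x \<otimes>\<^bsub>G\<^esub> s \<otimes>\<^bsub>G\<^esub> x | x. x \<in> carrier G}"

lemma centralizer_antimono: "S \<subseteq> T \<Longrightarrow> centralizer G T \<subseteq> centralizer G S"
  unfolding centralizer_def by blast

lemma centralizer_Un: "centralizer G (S \<union> T) = centralizer G S \<inter> centralizer G T"
  unfolding centralizer_def by blast

lemma (in group) subgroup_centralizer: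
  assumes "S \<subseteq> carrier G"
  shows "subgroup (centralizer G S) G"
proof (rule subgroupI)
  show "centralizer G S \<subseteq> carrier G" unfolding centralizer_def by blast
  show "centralizer G S \<noteq> {}" using assms unfolding centralizer_def by force
next
  fix x assume x: "x \<in> centralizer G S"
  have "inv x \<otimes> s = s \<otimes> inv x" if s: "s \<in> S" for s
  proof -
    have xs: "x \<in> carrier G" "s \<in> carrier G" using x s assms unfolding centralizer_def by auto
    have "inv x \<otimes> s = inv x \<otimes> (s \<otimes> x) \<otimes> inv x" using xs by (simp add: m_assoc)
    also have "\<dots> = inv x \<otimes> (x \<otimes> s) \<otimes> inv x" using x s unfolding centralizer_def by simp
    also have "\<dots> = s \<otimes> inv x" using xs by (simp add: m_assoc[symmetric])
    finally show ?thesis .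
  qed
  then show "inv x \<in> centralizer G S" using x unfolding centralizer_def by simp
next
  fix x y assume x: "x \<in> centralizer G S" and y: "y \<in> centralizer G S"
  have "x \<otimes> y \<otimes> s = s \<otimes> (x \<otimes> y)" if s: "s \<in> S" for s
  proof -
    have c: "x \<in> carrier G" "y \<in> carrier G" "s \<in> carrier G"
      using x y s assms unfolding centralizer_def by auto
    have "x \<otimes> y \<otimes> s = x \<otimes> (s \<otimes> y)" using y s c unfolding centralizer_def by (simp add: m_assoc)
    also have "\<dots> = s \<otimes> (x \<otimes> y)" using x s c unfolding centralizer_def by (simp add: m_assoc[symmetric])
    finally show ?thesis .
  qed
  then show "x \<otimes> y \<in> centralizer G S" using x y unfolding centralizer_def by simp
qed

lemma (in group) conj_eq_iff_commute:
  assumes "x \<in> carrier G" "y \<in> carrier G" "s \<in> carrier G"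
  shows "inv y \<otimes> s \<otimes> y = inv x \<otimes> s \<otimes> x \<longleftrightarrow> y \<otimes> inv x \<otimes> s = s \<otimes> (y \<otimes> inv x)"
proof -
  have "y \<otimes> (inv y \<otimes> s \<otimes> y) \<otimes> inv x = s \<otimes> (y \<otimes> inv x)"
    using assms by (simp add: m_assoc[symmetric])
  moreover have "y \<otimes> (inv x \<otimes> s \<otimes> x) \<otimes> inv x = y \<otimes> inv x \<otimes> s"
    using assms by (simp add: m_assoc)
  moreover have "inv y \<otimes> s \<otimes> y = inv x \<otimes> s \<otimes> x \<longleftrightarrow>
      y \<otimes> (inv y \<otimes> s \<otimes> y) \<otimes> inv x = y \<otimes> (inv x \<otimes> s \<otimes> x) \<otimes> inv x"
    using assms by simp
  ultimately show ?thesis by auto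
qed

lemma (in group) rcos_centralizer_iff_conj_eq:
  assumes "S \<subseteq> carrier G" "x \<in> carrier G" "y \<in> carrier G"
  shows "y \<in> centralizer G S #> x \<longleftrightarrow> (\<forall>s\<in>S. inv y \<otimes> s \<otimes> y = inv x \<otimes> s \<otimes> x)"
proof -
  have "y \<in> centralizer G S #> x \<longleftrightarrow> y \<otimes> inv x \<in> centralizer G S"
    using subgroup.rcos_module[OF subgroup_centralizer[OF assms(1)] is_group assms(2,3)] .
  also have "\<dots> \<longleftrightarrow> (\<forall>s\<in>S. inv y \<otimes> s \<otimes> y = inv x \<otimes> s \<otimes> x)"
    using conj_eq_iff_commute[OF assms(2,3)] assms unfolding centralizer_def by blast
  finally show ?thesis .
qed

text \<open>The right coset of \<open>centralizer G S\<close> containing \<open>x\<close> is determined by how \<open>x\<close>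
  conjugates the elements of \<open>S\<close>, and there are only finitely many possibilities for that.\<close>

lemma (in group) finite_rcosets_centralizer:
  assumes "finite S" "S \<subseteq> carrier G" "\<forall>s\<in>S. finite (conj_class G s)"
  shows "finite (rcosets (centralizer G S))"
proof -
  define conj_on_S where "conj_on_S x = (\<lambda>s\<in>S. inv x \<otimes> s \<otimes> x)" for x
  define F where "F = \<Union> (conj_class G ` S)"
  have fin: "finite (S \<rightarrow>\<^sub>E F)" unfolding F_def using assms(1,3) by (simp add: finite_PiE)
  have conj_range: "conj_on_S x \<in> S \<rightarrow>\<^sub>E F" if "x \<in> carrier G" for x
    using that unfolding conj_on_S_def F_def conj_class_def by auto
  have coset_eq_fibre: "centralizer G S #> x = {y \<in> carrier G. conj_on_S y = conj_on_S x}"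
    if x: "x \<in> carrier G" for x
  proof (rule Set.set_eqI)
    fix y
    have "centralizer G S #> x \<subseteq> carrier G"
      using r_coset_subset_G subgroup.subset[OF subgroup_centralizer[OF assms(2)]] x by blast
    moreover have "conj_on_S y = conj_on_S x \<longleftrightarrow> (\<forall>s\<in>S. inv y \<otimes> s \<otimes> y = inv x \<otimes> s \<otimes> x)"
      unfolding conj_on_S_def restrict_def fun_eq_iff by auto
    ultimately show "y \<in> centralizer G S #> x \<longleftrightarrow> y \<in> {y \<in> carrier G. conj_on_S y = conj_on_S x}"
      using rcos_centralizer_iff_conj_eq[OF assms(2) x, of y] by auto
  qed
  have "rcosets (centralizer G S) \<subseteq> (\<lambda>v. {y \<in> carrier G. conj_on_S y = v}) ` (S \<rightarrow>\<^sub>E F)"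
  proof
    fix X assume "X \<in> rcosets (centralizer G S)"
    then obtain x where x: "x \<in> carrier G" "X = centralizer G S #> x" unfolding RCOSETS_def by blast
    then show "X \<in> (\<lambda>v. {y \<in> carrier G. conj_on_S y = v}) ` (S \<rightarrow>\<^sub>E F)"
      using coset_eq_fibre[OF x(1)] conj_range[OF x(1)] by blast
  qed
  then show ?thesis using fin finite_surj by blast
qed

text \<open>Modulo \<open>N\<close> every element commutes with \<open>s\<close>, so each conjugate of \<open>s\<close> is \<open>s\<close> times
  a commutator, which lies in the derived subgroup and hence in \<open>N\<close>.\<close>

lemma (in group) conj_class_subset_rcos:
  assumes "N \<lhd> G" "comm_group (G Mod N)" "s \<in> carrier G"
  shows "conj_class G s \<subseteq> N #> s"
proof
  fix z assume "z \<in> conj_class G s"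
  then obtain x where x: "x \<in> carrier G" "z = inv x \<otimes> s \<otimes> x" unfolding conj_class_def by blast
  have "inv x \<otimes> s \<otimes> inv (inv x) \<otimes> inv s \<in> derived G (carrier G)"
    unfolding derived_def using x(1) assms(3) by (intro generate.incl) blast
  then have comm: "inv x \<otimes> s \<otimes> x \<otimes> inv s \<in> N"
    using derived_minimal[OF assms(1,2)] x(1) by auto
  have "z = (inv x \<otimes> s \<otimes> x \<otimes> inv s) \<otimes> s" using x assms(3) by (simp add: m_assoc)
  then show "z \<in> N #> s" using comm unfolding r_coset_def by blast
qed

lemma (in group) finite_conj_class_of_finite_by_abelian:
  assumes "N \<lhd> G" "finite N" "comm_group (G Mod N)" "s \<in> carrier G"
  shows "finite (conj_class G s)"
proof (rule finite_subset[OF conj_class_subset_rcos[OF assms(1,3,4)]])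
  show "finite (N #> s)" using assms(2) unfolding r_coset_def by simp
qed

lemma linear_group_centralizer_finite_subset:
  fixes G :: "('g, 'b) monoid_scheme"
  assumes grp: "group G" and lin: "linear_group_over TYPE('k::field) G"
    and S: "S \<subseteq> carrier G"
  shows "\<exists>B\<subseteq>S. finite B \<and> centralizer G B = centralizer G S"
proof -
  obtain n and H :: "'k mat set"
    where H: "subgroup H (GL n)" and iso: "G \<cong> (GL n)\<lparr>carrier := H\<rparr>"
    using lin unfolding linear_group_over_def by blast
  obtain h where h: "h \<in> iso G ((GL n)\<lparr>carrier := H\<rparr>)"
    using iso unfolding is_iso_def by blast
  have h_mat: "h x \<in> carrier_mat n n" if "x \<in> carrier G" for x
    using h that subgroup.subset[OF H] unfolding iso_def hom_def GL_def by auto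
  have h_mult: "h (x \<otimes>\<^bsub>G\<^esub> y) = h x * h y" if "x \<in> carrier G" "y \<in> carrier G" for x y
    using h that unfolding iso_def hom_def GL_def by auto
  have h_inj: "inj_on h (carrier G)"
    using h unfolding iso_def bij_betw_def by auto
  have h_commute_iff: "x \<otimes>\<^bsub>G\<^esub> y = y \<otimes>\<^bsub>G\<^esub> x \<longleftrightarrow> h x * h y = h y * h x"
    if "x \<in> carrier G" "y \<in> carrier G" for x y
    using that h_mult inj_onD[OF h_inj] monoid.m_closed[OF group.is_monoid[OF grp]] by metis
  obtain B' where B': "B' \<subseteq> h ` S" "finite B'"
    and B'_comm: "\<forall>M\<in>carrier_mat n n. (\<forall>b\<in>B'. M * b = b * M) \<longrightarrow> (\<forall>t\<in>h ` S. M * t = t * M)"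
    using mat_commute_finite_subset[of "h ` S" n] S h_mat by blast
  obtain B where B: "B \<subseteq> S" "finite B" "B' = h ` B"
    using finite_subset_image[OF B'(2,1)] by blast
  have "centralizer G B \<subseteq> centralizer G S"
  proof
    fix a assume a: "a \<in> centralizer G B"
    then have aG: "a \<in> carrier G" unfolding centralizer_def by blast
    have "\<forall>b\<in>B'. h a * b = b * h a"
      using a B(1,3) S h_commute_iff[OF aG] unfolding centralizer_def by blast
    then have "\<forall>t\<in>h ` S. h a * t = t * h a" using B'_comm h_mat[OF aG] by blast
    then show "a \<in> centralizer G S"
      using aG S h_commute_iff[OF aG] unfolding centralizer_def by blast
  qed
  then show ?thesis using B(1,2) centralizer_antimono[OF B(1)] by blast
qed

theorem lemma2:
  fixes G :: "('g, 'b) monoid_scheme"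
  assumes "group G"
    and "linear_group_over TYPE('k::field) G"
    and "finite_by_abelian G"
  shows "virtually_abelian G"
proof -
  interpret group G by fact
  obtain N where N: "N \<lhd> G" "finite N" "comm_group (G Mod N)"
    using assms(3) unfolding finite_by_abelian_def by blast
  have NG: "N \<subseteq> carrier G" using normal_imp_subgroup[OF N(1)] subgroup.subset by blast
  define C where "C = centralizer G N"
  have "C \<subseteq> carrier G" unfolding C_def centralizer_def by blast
  then obtain B where B: "B \<subseteq> C" "finite B" "centralizer G B = centralizer G C"
    using linear_group_centralizer_finite_subset[OF assms(1,2)] by blast
  define A where "A = centralizer G (N \<union> B)"
  have NB: "N \<union> B \<subseteq> carrier G" using NG B(1) \<open>C \<subseteq> carrier G\<close> by blast
  have "A = C \<inter> centralizer G C" unfolding A_def C_def centralizer_Un B(3) ..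
  then have "x \<otimes>\<^bsub>G\<^esub> y = y \<otimes>\<^bsub>G\<^esub> x" if "x \<in> A" "y \<in> A" for x y
    using that unfolding centralizer_def by blast
  then have "comm_group (G\<lparr>carrier := A\<rparr>)"
    using group.group_comm_groupI[OF subgroup.subgroup_is_group[OF subgroup_centralizer[OF NB]]]
    unfolding A_def by simp
  moreover have "finite (rcosets\<^bsub>G\<^esub> A)"
    unfolding A_def using finite_rcosets_centralizer[OF _ NB] N(2) B(2) NB
      finite_conj_class_of_finite_by_abelian[OF N] by blast
  ultimately show ?thesis
    unfolding virtually_abelian_def using subgroup_centralizer[OF NB] A_def by blast
qed

end
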